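(* Let $l\ge 1$, $d=2l+1$, and let $V=\mathbb{F}_3^{d}$ (or $S^d$ with $|S|=3$). Define relations on $V$: $S_0=\{(\mathbf x,\mathbf x)\}$, and for $j=1,2,3$, $S_j=\{(\mathbf x,\mathbf y): \delta(\mathbf x,\mathbf y)\ge 1,\ \delta(\mathbf x,\mathbf y)\equiv j\pmod 3\}$, where $\delta$ is the Hamming distance (this is a three-class association scheme, the KSD-scheme). Let $A_0=I,A_1,A_2,A_3$ be the adjacency matrices of $S_0,\dots,S_3$. Then $$A_1^3=\big(3^{4l-1}+(-1)^l3^{3l}+5\cdot 3^{2l-1}\big)A_1+\big(3^{4l-1}+(-1)^l3^{3l}+2\cdot 3^{2l-1}\big)(J-A_1),$$ $$A_2^3=\big(3^{4l-1}-(-1)^l3^{3l}+5\cdot 3^{2l-1}\big)A_2+\big(3^{4l-1}-(-1)^l3^{3l}+2\cdot 3^{2l-1}\big)(J-A_2),$$ $$(A_3+I)^3=\big(3^{4l-1}+2\cdot 3^{2l-1}\big)(A_3+I)+\big(3^{4l-1}-3^{2l-1}\big)(J-A_3-I).$$ Consequently $A_1$, $A_2$, $A_3+I$ are incidence matrices of three non-isomorphic symmetric partial geometric designs with parameters $(v,k;\alpha,\beta)$: $\big(3^{2l+1},\ 3^{2l}+(-1)^l3^l;\ 3^{4l-1}+(-1)^l3^{3l}+2\cdot 3^{2l-1},\ 3^{4l-1}+(-1)^l3^{3l}+5\cdot 3^{2l-1}\big)$, $\big(3^{2l+1},\ 3^{2l}-(-1)^l3^l;\ 3^{4l-1}-(-1)^l3^{3l}+2\cdot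 3^{2l-1},\ 3^{4l-1}-(-1)^l3^{3l}+5\cdot 3^{2l-1}\big)$, $\big(3^{2l+1},\ 3^{2l};\ 3^{4l-1}-3^{2l-1},\ 3^{4l-1}+2\cdot 3^{2l-1}\big)$.
   Context: $J$ is the all-ones matrix. A symmetric partial geometric design with parameters $(v,k;\alpha,\beta)$ is a design with $v$ points and $v$ blocks, each block of size $k$ and each point in $k$ blocks, whose incidence matrix $N$ satisfies $NN^TN=\beta N+\alpha(J-N)$. *)

theory Defs
  imports Main
begin

text \<open>Words of length d over an alphabet S (for S of size 3 this is F_3^d up to relabelling).\<close>
definition words :: "'a set \<Rightarrow> nat \<Rightarrow> 'a list set" where
  "words S d = {xs. length xs = d \<and> set xs \<subseteq> S}"

definition hamming :: "'a list \<Rightarrow> 'a list \<Rightarrow> nat" where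
  "hamming xs ys = card {i. i < length xs \<and> xs ! i \<noteq> ys ! i}"

type_synonym 'a imat = "'a \<Rightarrow> 'a \<Rightarrow> int"

definition mmult :: "'b set \<Rightarrow> ('a \<Rightarrow> 'b \<Rightarrow> int) \<Rightarrow> ('b \<Rightarrow> 'c \<Rightarrow> int) \<Rightarrow> 'a \<Rightarrow> 'c \<Rightarrow> int" where
  "mmult M A B = (\<lambda>x y. \<Sum>z\<in>M. A x z * B z y)"

definition mtrans :: "('a \<Rightarrow> 'b \<Rightarrow> int) \<Rightarrow> 'b \<Rightarrow> 'a \<Rightarrow> int" where
  "mtrans A = (\<lambda>x y. A y x)"

definition idm :: "'a \<Rightarrow> 'a \<Rightarrow> int" where
  "idm = (\<lambda>x y. if x = y then 1 else 0)"

definition onesm :: "'a \<Rightarrow> 'b \<Rightarrow> int" where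
  "onesm = (\<lambda>x y. 1)"

definition ksd_adj :: "nat \<Rightarrow> 'a list \<Rightarrow> 'a list \<Rightarrow> int" where
  "ksd_adj j x y =
     (if j = 0 then (if x = y then 1 else 0)
      else if 1 \<le> hamming x y \<and> hamming x y mod 3 = j mod 3 then 1 else 0)"

definition sym_partial_geometric_design ::
  "'p set \<Rightarrow> 'b set \<Rightarrow> ('p \<Rightarrow> 'b \<Rightarrow> int) \<Rightarrow> nat \<Rightarrow> int \<Rightarrow> int \<Rightarrow> int \<Rightarrow> bool" where
  "sym_partial_geometric_design P B N v k \<alpha> \<beta> \<longleftrightarrow>
     finite P \<and> finite B \<and> card P = v \<and> card B = v \<and>
     (\<forall>x\<in>P. \<forall>y\<in>B. N x y = 0 \<or> N x y = 1) \<and>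
     (\<forall>y\<in>B. (\<Sum>x\<in>P. N x y) = k) \<and>
     (\<forall>x\<in>P. (\<Sum>y\<in>B. N x y) = k) \<and>
     (\<forall>x\<in>P. \<forall>y\<in>B. mmult P (mmult B N (mtrans N)) N x y = \<beta> * N x y + \<alpha> * (1 - N x y))"

definition design_iso ::
  "'p set \<Rightarrow> 'b set \<Rightarrow> ('p \<Rightarrow> 'b \<Rightarrow> int) \<Rightarrow> 'q set \<Rightarrow> 'c set \<Rightarrow> ('q \<Rightarrow> 'c \<Rightarrow> int) \<Rightarrow> bool" where
  "design_iso P B N P' B' N' \<longleftrightarrow>
     (\<exists>\<sigma> \<tau>. bij_betw \<sigma> P P' \<and> bij_betw \<tau> B B' \<and>
        (\<forall>x\<in>P. \<forall>y\<in>B. N' (\<sigma> x) (\<tau> y) = N x y))"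

end

theory Submission
  imports Defs Complex_Main
begin

text \<open>For words of length \<open>d\<close> over a 3-letter alphabet, the kernels \<open>q^\<delta>(x,y)\<close> with \<open>\<delta>\<close> the
  Hamming distance factor over coordinates, so their products are computed letter by letter:
  \<open>\<Sum>\<^sub>z p^\<delta>(x,z) q^\<delta>(z,y) = (1+2pq)^(d-\<delta>(x,y)) (p+q+pq)^\<delta>(x,y)\<close>. For \<open>q \<in> {0, 1, \<omega>, \<omega>\<^sup>2}\<close>,
  \<open>\<omega>\<close> a primitive cube root of unity, this makes the span of \<open>I = 0^\<delta>\<close>, \<open>J = 1^\<delta>\<close>, \<open>\<omega>^\<delta>\<close> and
  \<open>\<omega>^(2\<delta>)\<close> a commutative algebra with explicit structure constants. By the roots-of-unity filter
  the indicator of \<open>\<delta> + i \<equiv> 0 (mod 3)\<close> is \<open>(J + \<omega>^i \<omega>^\<delta> + \<omega>^(2i) \<omega>^(2\<delta>))/3\<close>; this covers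
  \<open>A\<^sub>1\<close>, \<open>A\<^sub>2\<close> and \<open>A\<^sub>3 + I\<close>, so their cubes reduce to arithmetic on coefficient vectors. For
  \<open>d = 2l+1\<close> the structure constants are \<open>3Q\<^sup>2\<close>, \<open>Q(1+2\<omega>)\<close> and \<open>-Q(1+2\<omega>)\<close> with \<open>Q = (-3)^l\<close>, and
  each cube identity becomes a polynomial identity in \<open>Q\<close> and \<open>\<omega>\<close>. The three designs have
  different replication numbers \<open>k\<close>, hence are pairwise non-isomorphic.\<close>

lemma words_0: "words S 0 = {[]}"
  by (auto simp: words_def)

lemma words_Suc: "words S (Suc d) = (\<lambda>(c, zs). c # zs) ` (S \<times> words S d)"
  unfolding words_def by (auto simp: length_Suc_conv image_iff)

lemma inj_on_Cons_pair: "inj_on (\<lambda>(c, zs). c # zs) A"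
  by (auto simp: inj_on_def)

lemma finite_words: "finite S \<Longrightarrow> finite (words S d)"
  by (induction d) (auto simp: words_0 words_Suc)

lemma card_words: "finite S \<Longrightarrow> card (words S d) = card S ^ d"
  by (induction d) (auto simp: words_0 words_Suc card_image inj_on_Cons_pair card_cartesian_product)

lemma hamming_Cons:
  assumes "length xs = length ys"
  shows "hamming (a # xs) (b # ys) = of_bool (a \<noteq> b) + hamming xs ys"
proof -
  have "{i. i < length (a # xs) \<and> (a # xs) ! i \<noteq> (b # ys) ! i}
      = (if a = b then {} else {0}) \<union> Suc ` {i. i < length xs \<and> xs ! i \<noteq> ys ! i}"
    by (auto simp: image_iff less_Suc_eq_0_disj)
  then show ?thesis
    by (simp add: hamming_def card_image)
qed

lemma hamming_le_length: "hamming xs ys \<le> length xs"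
  unfolding hamming_def by (rule card_mono[of "{..<length xs}", simplified]) auto

lemma hamming_commute: "length xs = length ys \<Longrightarrow> hamming xs ys = hamming ys xs"
  unfolding hamming_def by metis

lemma hamming_eq_0_iff: "length xs = length ys \<Longrightarrow> hamming xs ys = 0 \<longleftrightarrow> xs = ys"
  by (induction xs ys rule: list_induct2) (auto simp: hamming_Cons, simp add: hamming_def)

lemma sum_power_of_bool_neq:
  fixes p q :: "'b :: comm_ring_1"
  assumes "finite S" "a \<in> S" "b \<in> S"
  shows "(\<Sum>c\<in>S. p ^ of_bool (a \<noteq> c) * q ^ of_bool (c \<noteq> b))
       = (if a = b then 1 + of_nat (card S - 1) * p * q else p + q + of_nat (card S - 2) * p * q)"
proof (cases "a = b")
  case True
  have "(\<Sum>c\<in>S. p ^ of_bool (a \<noteq> c) * q ^ of_bool (c \<noteq> b))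
      = (\<Sum>c\<in>S. (if c = a then 1 - p * q else 0) + p * q)"
    using True by (intro sum.cong) auto
  moreover have "card S \<ge> 1"
    using assms by (metis One_nat_def Suc_leI card_gt_0_iff empty_iff)
  ultimately show ?thesis
    using assms True by (simp add: sum.distrib of_nat_diff algebra_simps)
next
  case False
  have "(\<Sum>c\<in>S. p ^ of_bool (a \<noteq> c) * q ^ of_bool (c \<noteq> b))
      = (\<Sum>c\<in>S. (if c = a then q - p * q else 0) + (if c = b then p - p * q else 0) + p * q)"
    using False by (intro sum.cong) auto
  moreover have "card S \<ge> 2"
    using card_mono[OF assms(1), of "{a, b}"] assms False by simp
  ultimately show ?thesis
    using assms False by (simp add: sum.distrib of_nat_diff algebra_simps)
qed

lemma sum_words_power_hamming:
  fixes p q :: "'b :: comm_ring_1"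
  assumes "finite S" "x \<in> words S d" "y \<in> words S d"
  shows "(\<Sum>z\<in>words S d. p ^ hamming x z * q ^ hamming z y)
       = (1 + of_nat (card S - 1) * p * q) ^ (d - hamming x y)
         * (p + q + of_nat (card S - 2) * p * q) ^ hamming x y"
  using assms(2,3)
proof (induction d arbitrary: x y)
  case 0
  then show ?case by (simp add: words_0 hamming_def)
next
  case (Suc d)
  let ?e = "1 + of_nat (card S - 1) * p * q" and ?f = "p + q + of_nat (card S - 2) * p * q"
  obtain a xs b ys where x: "x = a # xs" "a \<in> S" "xs \<in> words S d"
    and y: "y = b # ys" "b \<in> S" "ys \<in> words S d"
    using Suc.prems by (cases x; cases y) (auto simp: words_def)
  have len: "length zs = length xs" "length zs = length ys" if "zs \<in> words S d" for zs
    using that x y by (auto simp: words_def)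
  have "p ^ hamming x (c # zs) * q ^ hamming (c # zs) y
      = (p ^ of_bool (a \<noteq> c) * q ^ of_bool (c \<noteq> b)) * (p ^ hamming xs zs * q ^ hamming zs ys)"
    if "zs \<in> words S d" for c zs
    using len[OF that] x(1) y(1) by (simp only: hamming_Cons power_add mult_ac)
  then have "(\<Sum>z\<in>words S (Suc d). p ^ hamming x z * q ^ hamming z y)
      = (\<Sum>c\<in>S. \<Sum>zs\<in>words S d. (p ^ of_bool (a \<noteq> c) * q ^ of_bool (c \<noteq> b))
                                   * (p ^ hamming xs zs * q ^ hamming zs ys))"
    unfolding words_Suc sum.reindex[OF inj_on_Cons_pair] sum.cartesian_product
    by (intro sum.cong refl) auto
  also have "\<dots> = (if a = b then ?e else ?f) * (?e ^ (d - hamming xs ys) * ?f ^ hamming xs ys)"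
    by (simp only: sum_product[symmetric] Suc.IH[OF x(3) y(3)] sum_power_of_bool_neq[OF assms(1) x(2) y(2)])
  also have "\<dots> = ?e ^ (Suc d - hamming x y) * ?f ^ hamming x y"
  proof -
    have "hamming xs ys \<le> d" and "length xs = length ys"
      using hamming_le_length[of xs ys] x(3) y(3) by (auto simp: words_def)
    then show ?thesis
      using x(1) y(1) by (simp add: hamming_Cons Suc_diff_le mult_ac)
  qed
  finally show ?case .
qed

lemma sum_words_power_hamming_card_3:
  fixes p q r :: "'b :: comm_ring_1"
  assumes "card S = 3" "x \<in> words S d" "y \<in> words S d"
    and "p + q + p * q = r * (1 + 2 * p * q)"
  shows "(\<Sum>z\<in>words S d. p ^ hamming x z * q ^ hamming z y) = (1 + 2 * p * q) ^ d * r ^ hamming x y"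
proof -
  let ?e = "1 + 2 * p * q"
  have "finite S"
    using assms(1) by (metis card.infinite zero_neq_numeral)
  then have "(\<Sum>z\<in>words S d. p ^ hamming x z * q ^ hamming z y)
      = ?e ^ (d - hamming x y) * (p + q + p * q) ^ hamming x y"
    using sum_words_power_hamming[of S x d y p q] assms(1-3) by (simp add: mult.assoc)
  also have "\<dots> = ?e ^ (d - hamming x y + hamming x y) * r ^ hamming x y"
    by (simp only: assms(4) power_mult_distrib power_add mult_ac)
  also have "d - hamming x y + hamming x y = d"
    using hamming_le_length[of x y] assms(2) by (simp add: words_def)
  finally show ?thesis .
qed

definition \<omega> :: complex where
  "\<omega> = Complex (-1/2) (sqrt 3 / 2)"

lemma omega_sq_plus_omega_plus_1: "\<omega>^2 + \<omega> + 1 = 0"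
  by (simp add: \<omega>_def complex_eq_iff power2_eq_square)

lemma omega_cube: "\<omega>^3 = 1"
proof -
  have "\<omega>^3 - 1 = (\<omega> - 1) * (\<omega>^2 + \<omega> + 1)"
    by (simp add: algebra_simps power2_eq_square power3_eq_cube)
  then show ?thesis
    using omega_sq_plus_omega_plus_1 by simp
qed

lemma omega_power_mod_3: "\<omega> ^ n = \<omega> ^ (n mod 3)"
  by (metis div_mult_mod_eq mult.commute mult_1 omega_cube power_add power_mult power_one)

lemma roots_of_unity_filter: "1 + \<omega> ^ n + (\<omega>^2) ^ n = (if 3 dvd n then 3 else 0)"
proof -
  have sq: "(\<omega>^2) ^ n = (\<omega> ^ (n mod 3))^2"
    by (metis omega_power_mod_3 power_mult mult.commute)
  have "\<omega>^4 = \<omega>^3 * \<omega>"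
    by algebra
  then have fourth: "\<omega>^4 = \<omega>"
    using omega_cube by simp
  consider "n mod 3 = 0" | "n mod 3 = 1" | "n mod 3 = 2"
    by arith
  then show ?thesis
  proof cases
    case 1
    then show ?thesis by (simp add: sq omega_power_mod_3[of n] dvd_eq_mod_eq_0)
  next
    case 2
    then show ?thesis
      using omega_sq_plus_omega_plus_1 by (simp add: sq omega_power_mod_3[of n] dvd_eq_mod_eq_0 add_ac)
  next
    case 3
    then show ?thesis
      using omega_sq_plus_omega_plus_1 by (simp add: sq omega_power_mod_3[of n] dvd_eq_mod_eq_0 fourth add_ac)
  qed
qed

lemma omega_products: "\<omega> * \<omega>^2 = 1" "\<omega>^2 * \<omega> = 1" "\<omega>^2 * \<omega>^2 = \<omega>"
  using omega_sq_plus_omega_plus_1 by algebra+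

text \<open>Here \<open>0^\<delta>\<close> is the identity matrix and \<open>1^\<delta>\<close> the all-ones matrix.\<close>

definition ksd_kernel :: "complex \<times> complex \<times> complex \<times> complex \<Rightarrow> 'a list \<Rightarrow> 'a list \<Rightarrow> complex" where
  "ksd_kernel c x y = (case c of (c0, c1, c2, c3) \<Rightarrow>
     c0 * 0 ^ hamming x y + c1 * 1 ^ hamming x y + c2 * \<omega> ^ hamming x y + c3 * (\<omega>^2) ^ hamming x y)"

text \<open>The multiplication table behind \<open>ksd_times\<close>, writing \<open>E = \<omega>^\<delta>\<close> and \<open>E' = (\<omega>\<^sup>2)^\<delta>\<close>:
  \<open>J J = N J\<close>, \<open>J E = \<sigma> J\<close>, \<open>J E' = \<tau> J\<close>, \<open>E E = \<tau> E'\<close>, \<open>E E' = N I\<close>, \<open>E' E' = \<sigma> E\<close>,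
  with \<open>N = 3^d\<close>, \<open>\<sigma> = (1+2\<omega>)^d\<close>, \<open>\<tau> = (1+2\<omega>\<^sup>2)^d\<close>.\<close>

definition ksd_times :: "complex \<Rightarrow> complex \<Rightarrow> complex
    \<Rightarrow> complex \<times> complex \<times> complex \<times> complex \<Rightarrow> complex \<times> complex \<times> complex \<times> complex
    \<Rightarrow> complex \<times> complex \<times> complex \<times> complex" where
  "ksd_times N \<sigma> \<tau> c c' = (case c of (c0, c1, c2, c3) \<Rightarrow> case c' of (c0', c1', c2', c3') \<Rightarrow>
     (c0 * c0' + N * (c2 * c3' + c3 * c2'),
      c0 * c1' + c1 * c0' + N * c1 * c1' + \<sigma> * (c1 * c2' + c2 * c1') + \<tau> * (c1 * c3' + c3 * c1'),
      c0 * c2' + c2 * c0' + \<sigma> * c3 * c3',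
      c0 * c3' + c3 * c0' + \<tau> * c2 * c2'))"

lemma sum_scaled_products:
  fixes a b :: "'b :: comm_semiring_1"
  shows "(\<Sum>z\<in>A. (a * f z) * (b * g z)) = a * b * (\<Sum>z\<in>A. f z * g z)"
  by (simp add: sum_distrib_left mult_ac)

lemma ksd_kernel_mult:
  assumes S: "card S = 3" and x: "x \<in> words S d" and y: "y \<in> words S d"
  shows "(\<Sum>z\<in>words S d. ksd_kernel c x z * ksd_kernel c' z y)
       = ksd_kernel (ksd_times (3 ^ d) ((1 + 2 * \<omega>) ^ d) ((1 + 2 * \<omega>^2) ^ d) c c') x y"
proof -
  note K = sum_words_power_hamming_card_3[OF S x y]
  have left_0: "(\<Sum>z\<in>words S d. 0 ^ hamming x z * q ^ hamming z y) = q ^ hamming x y" for q :: complex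
    using K[of 0 q q] by simp
  have right_0: "(\<Sum>z\<in>words S d. p ^ hamming x z * 0 ^ hamming z y) = p ^ hamming x y" for p :: complex
    using K[of p 0 p] by simp
  have left_1: "(\<Sum>z\<in>words S d. 1 ^ hamming x z * q ^ hamming z y) = (1 + 2 * q) ^ d" for q :: complex
    using K[of 1 q 1] by simp
  have right_1: "(\<Sum>z\<in>words S d. p ^ hamming x z * 1 ^ hamming z y) = (1 + 2 * p) ^ d" for p :: complex
    using K[of p 1 1] by simp
  have "\<omega> + \<omega> + \<omega> * \<omega> = \<omega>^2 * (1 + 2 * \<omega> * \<omega>)" "\<omega> + \<omega>^2 + \<omega> * \<omega>^2 = 0 * (1 + 2 * \<omega> * \<omega>^2)"
    "\<omega>^2 + \<omega> + \<omega>^2 * \<omega> = 0 * (1 + 2 * \<omega>^2 * \<omega>)"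
    "\<omega>^2 + \<omega>^2 + \<omega>^2 * \<omega>^2 = \<omega> * (1 + 2 * \<omega>^2 * \<omega>^2)"
    using omega_sq_plus_omega_plus_1 by algebra+
  note K_omega = K[OF this(1), unfolded mult.assoc power2_eq_square[symmetric]]
    K[OF this(2), unfolded mult.assoc omega_products] K[OF this(3), unfolded mult.assoc omega_products]
    K[OF this(4), unfolded mult.assoc omega_products]
  obtain c0 c1 c2 c3 where c: "c = (c0, c1, c2, c3)"
    by (cases c)
  obtain c0' c1' c2' c3' where c': "c' = (c0', c1', c2', c3')"
    by (cases c')
  show ?thesis
    unfolding c c' ksd_kernel_def ksd_times_def prod.case distrib_left distrib_right sum.distrib
      sum_scaled_products left_0 right_0 left_1 right_1 K_omega
    by (simp add: algebra_simps)
qed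

definition residue_coeffs :: "nat \<Rightarrow> complex \<times> complex \<times> complex \<times> complex" where
  "residue_coeffs i = (0, 1/3, \<omega> ^ i / 3, (\<omega>^2) ^ i / 3)"

lemma ksd_kernel_residue_coeffs:
  "ksd_kernel (residue_coeffs i) x y = of_bool (3 dvd hamming x y + i)"
proof -
  have "ksd_kernel (residue_coeffs i) x y = (1 + \<omega> ^ (hamming x y + i) + (\<omega>^2) ^ (hamming x y + i)) / 3"
    by (simp add: ksd_kernel_def residue_coeffs_def power_add field_simps)
  also have "\<dots> = of_bool (3 dvd hamming x y + i)"
    unfolding roots_of_unity_filter by simp
  finally show ?thesis .
qed

lemma ksd_adj_as_residue_class:
  assumes "length x = length y"
  shows "ksd_adj 1 x y = of_bool (3 dvd hamming x y + 2)"
    and "ksd_adj 2 x y = of_bool (3 dvd hamming x y + 1)"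
    and "ksd_adj 3 x y + ksd_adj 0 x y = of_bool (3 dvd hamming x y)"
  using hamming_eq_0_iff[OF assms] by (auto simp: ksd_adj_def) presburger+

lemma of_int_mmult_ksd_kernel:
  fixes A B :: "'a list \<Rightarrow> 'a list \<Rightarrow> int"
  assumes S: "card S = 3" and x: "x \<in> words S d" and y: "y \<in> words S d"
    and A: "\<And>u v. u \<in> words S d \<Longrightarrow> v \<in> words S d \<Longrightarrow> of_int (A u v) = ksd_kernel c u v"
    and B: "\<And>u v. u \<in> words S d \<Longrightarrow> v \<in> words S d \<Longrightarrow> of_int (B u v) = ksd_kernel c' u v"
  shows "of_int (mmult (words S d) A B x y)
       = ksd_kernel (ksd_times (3 ^ d) ((1 + 2 * \<omega>) ^ d) ((1 + 2 * \<omega>^2) ^ d) c c') x y"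
proof -
  have "of_int (mmult (words S d) A B x y) = (\<Sum>z\<in>words S d. ksd_kernel c x z * ksd_kernel c' z y)"
    unfolding mmult_def of_int_sum of_int_mult using x y by (intro sum.cong) (auto simp: A B)
  also have "\<dots> = ksd_kernel (ksd_times (3 ^ d) ((1 + 2 * \<omega>) ^ d) ((1 + 2 * \<omega>^2) ^ d) c c') x y"
    by (rule ksd_kernel_mult[OF S x y])
  finally show ?thesis .
qed

lemma sym_partial_geometric_design_if_symmetric:
  fixes A :: "'a \<Rightarrow> 'a \<Rightarrow> int"
  assumes "finite V" "card V = v"
    and sym: "\<And>x y. x \<in> V \<Longrightarrow> y \<in> V \<Longrightarrow> A x y = A y x"
    and "\<And>x y. x \<in> V \<Longrightarrow> y \<in> V \<Longrightarrow> A x y = 0 \<or> A x y = 1"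
    and row: "\<And>x. x \<in> V \<Longrightarrow> (\<Sum>y\<in>V. A x y) = k"
    and cube: "\<And>x y. x \<in> V \<Longrightarrow> y \<in> V \<Longrightarrow>
                 mmult V (mmult V A A) A x y = \<beta> * A x y + \<alpha> * (1 - A x y)"
  shows "sym_partial_geometric_design V V A v k \<alpha> \<beta>"
  unfolding sym_partial_geometric_design_def
proof (intro conjI ballI)
  fix x y assume x: "x \<in> V" and y: "y \<in> V"
  show "(\<Sum>x\<in>V. A x y) = k"
    using row[OF y] sym y by (metis (no_types, lifting) sum.cong)
  have "mmult V (mmult V A (mtrans A)) A x y = mmult V (mmult V A A) A x y"
    unfolding mmult_def mtrans_def using sym by (intro sum.cong refl arg_cong2[where f = "(*)"]) auto
  then show "mmult V (mmult V A (mtrans A)) A x y = \<beta> * A x y + \<alpha> * (1 - A x y)"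
    using cube[OF x y] by simp
qed (use assms in auto)

lemma design_iso_imp_eq_replication:
  assumes "sym_partial_geometric_design P B N v k \<alpha> \<beta>"
    and "sym_partial_geometric_design P' B' N' v' k' \<alpha>' \<beta>'"
    and iso: "design_iso P B N P' B' N'" and "v \<noteq> 0"
  shows "k = k'"
proof -
  obtain \<sigma> \<tau> where \<sigma>: "bij_betw \<sigma> P P'" and \<tau>: "bij_betw \<tau> B B'"
    and incidence: "\<forall>x\<in>P. \<forall>y\<in>B. N' (\<sigma> x) (\<tau> y) = N x y"
    using iso unfolding design_iso_def by blast
  obtain x where x: "x \<in> P"
    using assms(1,4) unfolding sym_partial_geometric_design_def by fastforce
  have "k' = (\<Sum>y\<in>B'. N' (\<sigma> x) y)"
    using assms(2) bij_betwE[OF \<sigma>] x unfolding sym_partial_geometric_design_def by simp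
  also have "\<dots> = (\<Sum>y\<in>B. N' (\<sigma> x) (\<tau> y))"
    using sum.reindex_bij_betw[OF \<tau>] by metis
  also have "\<dots> = (\<Sum>y\<in>B. N x y)"
    using incidence x by simp
  also have "\<dots> = k"
    using assms(1) x unfolding sym_partial_geometric_design_def by simp
  finally show ?thesis by simp
qed

lemma of_int_cube_ksd_kernel:
  fixes A :: "'a list \<Rightarrow> 'a list \<Rightarrow> int" and d :: nat
  defines "T \<equiv> ksd_times (3 ^ d) ((1 + 2 * \<omega>) ^ d) ((1 + 2 * \<omega>^2) ^ d)"
  assumes S: "card S = 3" and x: "x \<in> words S d" and y: "y \<in> words S d"
    and A: "\<And>u v. u \<in> words S d \<Longrightarrow> v \<in> words S d \<Longrightarrow> of_int (A u v) = ksd_kernel c u v"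
  shows "of_int (mmult (words S d) (mmult (words S d) A A) A x y) = ksd_kernel (T (T c c) c) x y"
proof -
  have "of_int (mmult (words S d) A A u v) = ksd_kernel (T c c) u v"
    if "u \<in> words S d" "v \<in> words S d" for u v
    unfolding T_def using of_int_mmult_ksd_kernel[OF S that A A] .
  then show ?thesis
    unfolding T_def using of_int_mmult_ksd_kernel[OF S x y _ A] by blast
qed

lemma of_int_row_sum_ksd_kernel:
  fixes A :: "'a list \<Rightarrow> 'a list \<Rightarrow> int"
  assumes S: "card S = 3" and x: "x \<in> words S d"
    and A: "\<And>u v. u \<in> words S d \<Longrightarrow> v \<in> words S d \<Longrightarrow> of_int (A u v) = ksd_kernel c u v"
  shows "of_int (\<Sum>y\<in>words S d. A x y)
       = ksd_kernel (ksd_times (3 ^ d) ((1 + 2 * \<omega>) ^ d) ((1 + 2 * \<omega>^2) ^ d) c (0, 1, 0, 0)) x x"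
proof -
  have "of_int (onesm u v) = ksd_kernel (0, 1, 0, 0) u v" for u v :: "'a list"
    by (simp add: onesm_def ksd_kernel_def)
  moreover have "(\<Sum>y\<in>words S d. A x y) = mmult (words S d) A onesm x x"
    by (simp add: mmult_def onesm_def)
  ultimately show ?thesis
    using of_int_mmult_ksd_kernel[OF S x x A] by simp
qed

text \<open>The hypothesis \<open>cube\<close> says \<open>X\<^sup>3 = e X + a J\<close> for the coefficient vector \<open>X\<close> of \<open>A\<close>.\<close>

lemma residue_class_partial_geometric:
  fixes A :: "'a list \<Rightarrow> 'a list \<Rightarrow> int" and \<alpha> \<beta> k :: int
  assumes S: "card S = 3"
    and A: "\<And>x y. x \<in> words S d \<Longrightarrow> y \<in> words S d \<Longrightarrow> A x y = of_bool (3 dvd hamming x y + i)"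
    and cube: "ksd_times N \<sigma> \<tau> (ksd_times N \<sigma> \<tau> (residue_coeffs i) (residue_coeffs i)) (residue_coeffs i)
             = (0, e / 3 + a, e * \<omega> ^ i / 3, e * (\<omega>^2) ^ i / 3)"
    and row: "ksd_times N \<sigma> \<tau> (residue_coeffs i) (0, 1, 0, 0) = (0, r, 0, 0)"
    and N: "N = 3 ^ d" and \<sigma>: "\<sigma> = (1 + 2 * \<omega>) ^ d" and \<tau>: "\<tau> = (1 + 2 * \<omega>^2) ^ d"
    and \<alpha>: "of_int \<alpha> = a" and \<beta>: "of_int \<beta> = a + e" and k: "of_int k = r"
  shows "(\<forall>x\<in>words S d. \<forall>y\<in>words S d.
            mmult (words S d) (mmult (words S d) A A) A x y = \<beta> * A x y + \<alpha> * (onesm x y - A x y))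
       \<and> sym_partial_geometric_design (words S d) (words S d) A (3 ^ d) k \<alpha> \<beta>"
proof -
  let ?V = "words S d"
  have entries: "of_int (A x y) = ksd_kernel (residue_coeffs i) x y" if "x \<in> ?V" "y \<in> ?V" for x y
    by (simp add: A that ksd_kernel_residue_coeffs)
  have cube_entry: "mmult ?V (mmult ?V A A) A x y = \<beta> * A x y + \<alpha> * (onesm x y - A x y)"
    if x: "x \<in> ?V" and y: "y \<in> ?V" for x y
  proof -
    have "of_int (mmult ?V (mmult ?V A A) A x y) = ksd_kernel (0, e / 3 + a, e * \<omega> ^ i / 3, e * (\<omega>^2) ^ i / 3) x y"
      using of_int_cube_ksd_kernel[OF S x y entries] cube by (simp add: N \<sigma> \<tau>)
    also have "\<dots> = a + e * ksd_kernel (residue_coeffs i) x y"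
      by (simp add: ksd_kernel_def residue_coeffs_def algebra_simps)
    also have "\<dots> = of_int (\<beta> * A x y + \<alpha> * (onesm x y - A x y))"
      using entries[OF x y] by (simp add: \<alpha> \<beta> onesm_def algebra_simps)
    finally show ?thesis
      by (simp only: of_int_eq_iff)
  qed
  have row_sum: "(\<Sum>y\<in>?V. A x y) = k" if x: "x \<in> ?V" for x
  proof -
    have "of_int (\<Sum>y\<in>?V. A x y) = ksd_kernel (0, r, 0, 0) x x"
      using of_int_row_sum_ksd_kernel[OF S x entries] row by (simp add: N \<sigma> \<tau>)
    also have "\<dots> = of_int k"
      by (simp add: ksd_kernel_def k)
    finally show ?thesis
      by (simp only: of_int_eq_iff)
  qed
  have "finite S"
    using S by (metis card.infinite zero_neq_numeral)
  have "sym_partial_geometric_design ?V ?V A (3 ^ d) k \<alpha> \<beta>"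
  proof (rule sym_partial_geometric_design_if_symmetric)
    show "finite ?V" "card ?V = 3 ^ d"
      using S \<open>finite S\<close> by (simp_all add: finite_words card_words)
    show "A x y = A y x" if "x \<in> ?V" "y \<in> ?V" for x y
      using that by (simp add: A hamming_commute words_def)
    show "A x y = 0 \<or> A x y = 1" if "x \<in> ?V" "y \<in> ?V" for x y
      using that by (simp add: A)
  qed (use row_sum cube_entry[unfolded onesm_def] in auto)
  with cube_entry show ?thesis
    by blast
qed

text \<open>With \<open>Q = (-3)^l\<close> these are the structure constants for \<open>d = 2l+1\<close>. The right-hand sides
  are written in the shape \<open>(0, e/3 + a, e \<omega>^i/3, e (\<omega>\<^sup>2)^i/3)\<close>, hence the exponents 1 and 0.\<close>

lemma residue_coeffs_cube:
  fixes Q :: complex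
  defines "T \<equiv> ksd_times (3 * Q^2) (Q * (1 + 2 * \<omega>)) (- (Q * (1 + 2 * \<omega>)))"
  shows "T (T (residue_coeffs 2) (residue_coeffs 2)) (residue_coeffs 2)
         = (0, Q^2 / 3 + (Q^4 / 3 + Q^3 + 2 * Q^2 / 3), Q^2 * \<omega>^2 / 3, Q^2 * (\<omega>^2)^2 / 3)"
    and "T (T (residue_coeffs 1) (residue_coeffs 1)) (residue_coeffs 1)
         = (0, Q^2 / 3 + (Q^4 / 3 - Q^3 + 2 * Q^2 / 3), Q^2 * \<omega>^1 / 3, Q^2 * (\<omega>^2)^1 / 3)"
    and "T (T (residue_coeffs 0) (residue_coeffs 0)) (residue_coeffs 0)
         = (0, Q^2 / 3 + (Q^4 / 3 - Q^2 / 3), Q^2 * \<omega>^0 / 3, Q^2 * (\<omega>^2)^0 / 3)"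
  using omega_sq_plus_omega_plus_1
  unfolding T_def ksd_times_def residue_coeffs_def prod.case prod.inject
  by (safe; (simp add: field_simps)?; algebra)+

lemma residue_coeffs_row:
  fixes Q :: complex
  defines "T \<equiv> ksd_times (3 * Q^2) (Q * (1 + 2 * \<omega>)) (- (Q * (1 + 2 * \<omega>)))"
  shows "T (residue_coeffs 2) (0, 1, 0, 0) = (0, Q^2 + Q, 0, 0)"
    and "T (residue_coeffs 1) (0, 1, 0, 0) = (0, Q^2 - Q, 0, 0)"
    and "T (residue_coeffs 0) (0, 1, 0, 0) = (0, Q^2, 0, 0)"
  using omega_sq_plus_omega_plus_1
  unfolding T_def ksd_times_def residue_coeffs_def prod.case prod.inject
  by (safe; (simp add: field_simps)?; algebra)+

lemma odd_power_constants:
  "3 * ((-3) ^ l)^2 = (3 :: complex) ^ (2 * l + 1)"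
  "(-3) ^ l * (1 + 2 * \<omega>) = (1 + 2 * \<omega>) ^ (2 * l + 1)"
  "- ((-3) ^ l * (1 + 2 * \<omega>)) = (1 + 2 * \<omega>^2) ^ (2 * l + 1)"
proof -
  have sq: "(1 + 2 * \<omega>)^2 = -3" and conj: "1 + 2 * \<omega>^2 = - (1 + 2 * \<omega>)"
    using omega_sq_plus_omega_plus_1 by algebra+
  show "3 * ((-3) ^ l)^2 = (3 :: complex) ^ (2 * l + 1)"
    by (simp add: power_add mult.commute flip: power_mult)
  show power_odd: "(-3) ^ l * (1 + 2 * \<omega>) = (1 + 2 * \<omega>) ^ (2 * l + 1)"
    by (simp add: power_add power_mult sq)
  show "- ((-3) ^ l * (1 + 2 * \<omega>)) = (1 + 2 * \<omega>^2) ^ (2 * l + 1)"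
    using power_minus_odd[of "2 * l + 1" "1 + 2 * \<omega>"] by (simp add: conj power_odd)
qed

lemma ksd_parameter_powers:
  assumes "l \<ge> 1"
  shows "(3 :: complex) ^ (4 * l - 1) = ((-3) ^ l)^4 / 3"
    and "(3 :: complex) ^ (2 * l - 1) = ((-3) ^ l)^2 / 3"
    and "(-1 :: complex) ^ l * 3 ^ (3 * l) = ((-3) ^ l)^3"
    and "(3 :: complex) ^ (2 * l) = ((-3) ^ l)^2"
    and "(-1 :: complex) ^ l * 3 ^ l = (-3) ^ l"
proof -
  have pred: "(3 :: complex) ^ (n - 1) = 3 ^ n / 3" if "n \<ge> 1" for n
    using that by (simp add: power_diff)
  have minus: "(-3 :: complex) ^ l = (-1) ^ l * 3 ^ l"
    by (simp flip: power_mult_distrib)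
  have even: "((-3 :: complex) ^ l) ^ (2 * k) = 3 ^ (2 * k * l)" for k
  proof -
    have "((-3 :: complex) ^ l) ^ (2 * k) = ((-3)^2) ^ (k * l)"
      by (simp only: power_mult[symmetric] mult_ac)
    also have "\<dots> = (3^2) ^ (k * l)"
      by simp
    also have "\<dots> = 3 ^ (2 * k * l)"
      by (simp only: power_mult[symmetric] mult_ac)
    finally show ?thesis .
  qed
  show "(3 :: complex) ^ (4 * l - 1) = ((-3) ^ l)^4 / 3"
    using even[of 2] pred[of "4 * l"] assms by (simp add: mult.commute)
  show "(3 :: complex) ^ (2 * l - 1) = ((-3) ^ l)^2 / 3"
    using even[of 1] pred[of "2 * l"] assms by (simp add: mult.commute)
  have "((-1 :: complex) ^ l) ^ 3 = (-1) ^ l"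
    by (cases "even l") simp_all
  then show "(-1 :: complex) ^ l * 3 ^ (3 * l) = ((-3) ^ l)^3"
    by (simp add: minus power_mult_distrib mult.commute[of 3 l] power_mult)
  show "(3 :: complex) ^ (2 * l) = ((-3) ^ l)^2"
    using even[of 1] by (simp add: mult.commute)
  show "(-1 :: complex) ^ l * 3 ^ l = (-3) ^ l"
    by (simp add: minus)
qed

lemma ksd_parameters_complex:
  fixes l :: nat
  defines "Q \<equiv> (-3 :: complex) ^ l"
  assumes "l \<ge> 1"
  shows "of_int (3^(4*l-1) + (-1)^l * 3^(3*l) + 2 * 3^(2*l-1) :: int) = Q^4/3 + Q^3 + 2*Q^2/3"
    and "of_int (3^(4*l-1) + (-1)^l * 3^(3*l) + 5 * 3^(2*l-1) :: int) = Q^4/3 + Q^3 + 2*Q^2/3 + Q^2"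
    and "of_int (3^(2*l) + (-1)^l * 3^l :: int) = Q^2 + Q"
    and "of_int (3^(4*l-1) - (-1)^l * 3^(3*l) + 2 * 3^(2*l-1) :: int) = Q^4/3 - Q^3 + 2*Q^2/3"
    and "of_int (3^(4*l-1) - (-1)^l * 3^(3*l) + 5 * 3^(2*l-1) :: int) = Q^4/3 - Q^3 + 2*Q^2/3 + Q^2"
    and "of_int (3^(2*l) - (-1)^l * 3^l :: int) = Q^2 - Q"
    and "of_int (3^(4*l-1) - 3^(2*l-1) :: int) = Q^4/3 - Q^2/3"
    and "of_int (3^(4*l-1) + 2 * 3^(2*l-1) :: int) = Q^4/3 - Q^2/3 + Q^2"
    and "of_int (3^(2*l) :: int) = Q^2"
  unfolding Q_def of_int_add of_int_diff of_int_mult of_int_power of_int_numeral of_int_minus of_int_1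
    ksd_parameter_powers[OF assms(2)]
  by (simp_all add: field_simps)

lemma ksd_adj_1_partial_geometric:
  fixes S :: "'a set"
  assumes "card S = 3" and "l \<ge> 1"
  shows "(\<forall>x\<in>words S (2*l+1). \<forall>y\<in>words S (2*l+1).
            mmult (words S (2*l+1)) (mmult (words S (2*l+1)) (ksd_adj 1) (ksd_adj 1)) (ksd_adj 1) x y =
              (3^(4*l-1) + (-1)^l * 3^(3*l) + 5 * 3^(2*l-1)) * ksd_adj 1 x y
            + (3^(4*l-1) + (-1)^l * 3^(3*l) + 2 * 3^(2*l-1)) * (onesm x y - ksd_adj 1 x y))
       \<and> sym_partial_geometric_design (words S (2*l+1)) (words S (2*l+1)) (ksd_adj 1)
           (3^(2*l+1)) (3^(2*l) + (-1)^l * 3^l)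
           (3^(4*l-1) + (-1)^l * 3^(3*l) + 2 * 3^(2*l-1)) (3^(4*l-1) + (-1)^l * 3^(3*l) + 5 * 3^(2*l-1))"
  by (rule residue_class_partial_geometric[OF assms(1) _ residue_coeffs_cube(1) residue_coeffs_row(1)
        odd_power_constants ksd_parameters_complex(1-3)[OF assms(2)]])
     (rule ksd_adj_as_residue_class, simp add: words_def)

lemma ksd_adj_2_partial_geometric:
  fixes S :: "'a set"
  assumes "card S = 3" and "l \<ge> 1"
  shows "(\<forall>x\<in>words S (2*l+1). \<forall>y\<in>words S (2*l+1).
            mmult (words S (2*l+1)) (mmult (words S (2*l+1)) (ksd_adj 2) (ksd_adj 2)) (ksd_adj 2) x y =
              (3^(4*l-1) - (-1)^l * 3^(3*l) + 5 * 3^(2*l-1)) * ksd_adj 2 x y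
            + (3^(4*l-1) - (-1)^l * 3^(3*l) + 2 * 3^(2*l-1)) * (onesm x y - ksd_adj 2 x y))
       \<and> sym_partial_geometric_design (words S (2*l+1)) (words S (2*l+1)) (ksd_adj 2)
           (3^(2*l+1)) (3^(2*l) - (-1)^l * 3^l)
           (3^(4*l-1) - (-1)^l * 3^(3*l) + 2 * 3^(2*l-1)) (3^(4*l-1) - (-1)^l * 3^(3*l) + 5 * 3^(2*l-1))"
  by (rule residue_class_partial_geometric[OF assms(1) _ residue_coeffs_cube(2) residue_coeffs_row(2)
        odd_power_constants ksd_parameters_complex(4-6)[OF assms(2)]])
     (rule ksd_adj_as_residue_class, simp add: words_def)

lemma ksd_adj_3_plus_identity_partial_geometric:
  fixes S :: "'a set"
  defines "A \<equiv> \<lambda>x y. ksd_adj 3 x y + ksd_adj 0 x y :: int"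
  assumes "card S = 3" and "l \<ge> 1"
  shows "(\<forall>x\<in>words S (2*l+1). \<forall>y\<in>words S (2*l+1).
            mmult (words S (2*l+1)) (mmult (words S (2*l+1)) A A) A x y =
              (3^(4*l-1) + 2 * 3^(2*l-1)) * A x y + (3^(4*l-1) - 3^(2*l-1)) * (onesm x y - A x y))
       \<and> sym_partial_geometric_design (words S (2*l+1)) (words S (2*l+1)) A
           (3^(2*l+1)) (3^(2*l)) (3^(4*l-1) - 3^(2*l-1)) (3^(4*l-1) + 2 * 3^(2*l-1))"
  by (rule residue_class_partial_geometric[OF assms(2) _ residue_coeffs_cube(3) residue_coeffs_row(3)
        odd_power_constants ksd_parameters_complex(7-9)[OF assms(3)]])
     (unfold A_def add_0_right, rule ksd_adj_as_residue_class, simp add: words_def)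

theorem corollary6p3:
  fixes S :: "'a set" and l :: nat
  assumes "card S = 3" and "l \<ge> 1"
  defines "V \<equiv> words S (2 * l + 1)"
  defines "A1 \<equiv> (ksd_adj 1 :: 'a list \<Rightarrow> 'a list \<Rightarrow> int)"
      and "A2 \<equiv> (ksd_adj 2 :: 'a list \<Rightarrow> 'a list \<Rightarrow> int)"
      and "A3I \<equiv> (\<lambda>x y. ksd_adj 3 x y + ksd_adj 0 x y :: int)"
  shows
   "(\<forall>x\<in>V. \<forall>y\<in>V. mmult V (mmult V A1 A1) A1 x y =
        (3^(4*l-1) + (-1)^l * 3^(3*l) + 5 * 3^(2*l-1)) * A1 x y
      + (3^(4*l-1) + (-1)^l * 3^(3*l) + 2 * 3^(2*l-1)) * (onesm x y - A1 x y))
  \<and> (\<forall>x\<in>V. \<forall>y\<in>V. mmult V (mmult V A2 A2) A2 x y =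
        (3^(4*l-1) - (-1)^l * 3^(3*l) + 5 * 3^(2*l-1)) * A2 x y
      + (3^(4*l-1) - (-1)^l * 3^(3*l) + 2 * 3^(2*l-1)) * (onesm x y - A2 x y))
  \<and> (\<forall>x\<in>V. \<forall>y\<in>V. mmult V (mmult V A3I A3I) A3I x y =
        (3^(4*l-1) + 2 * 3^(2*l-1)) * A3I x y
      + (3^(4*l-1) - 3^(2*l-1)) * (onesm x y - A3I x y))
  \<and> sym_partial_geometric_design V V A1 (3^(2*l+1)) (3^(2*l) + (-1)^l * 3^l)
      (3^(4*l-1) + (-1)^l * 3^(3*l) + 2 * 3^(2*l-1)) (3^(4*l-1) + (-1)^l * 3^(3*l) + 5 * 3^(2*l-1))
  \<and> sym_partial_geometric_design V V A2 (3^(2*l+1)) (3^(2*l) - (-1)^l * 3^l)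
      (3^(4*l-1) - (-1)^l * 3^(3*l) + 2 * 3^(2*l-1)) (3^(4*l-1) - (-1)^l * 3^(3*l) + 5 * 3^(2*l-1))
  \<and> sym_partial_geometric_design V V A3I (3^(2*l+1)) (3^(2*l))
      (3^(4*l-1) - 3^(2*l-1)) (3^(4*l-1) + 2 * 3^(2*l-1))
  \<and> \<not> design_iso V V A1 V V A2
  \<and> \<not> design_iso V V A1 V V A3I
  \<and> \<not> design_iso V V A2 V V A3I"
proof -
  note D1 = ksd_adj_1_partial_geometric[OF assms(1,2), folded V_def A1_def]
  note D2 = ksd_adj_2_partial_geometric[OF assms(1,2), folded V_def A2_def]
  note D3 = ksd_adj_3_plus_identity_partial_geometric[OF assms(1,2), folded V_def]
  have "(3 :: nat) ^ (2 * l + 1) \<noteq> 0" and "(-1 :: int) ^ l * 3 ^ l \<noteq> 0"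
    by simp_all
  note replication = design_iso_imp_eq_replication[OF _ _ _ this(1)]
  show ?thesis
    unfolding A3I_def
    using D1 D2 D3 replication[OF D1[THEN conjunct2] D2[THEN conjunct2]]
      replication[OF D1[THEN conjunct2] D3[THEN conjunct2]] replication[OF D2[THEN conjunct2] D3[THEN conjunct2]]
      \<open>(-1 :: int) ^ l * 3 ^ l \<noteq> 0\<close>
    by auto
qed

end
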